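(* Let $G=(V,E)$ be a finite graph (parallel edges and loops allowed) and let $e\neq f$ be two edges of $G$. Then, as polynomials in the variables $\{x_g : g\in E\setminus\{e,f\}\}$, \[ \mathcal{M}_{ef}(1) \;=\; \sum_{\beta,\gamma}\Big(\mathbf{x}^{\beta}\mathbf{x}^{\gamma}\sum_{\mathbf{m}\in B_{\beta,\gamma}} \mathbf{m}\Big), \] where the outer sum runs over all ordered pairs $(\beta,\gamma)$ of disjoint subsets of $E\setminus\{e,f\}$.
   Context: Let $\{x_g : g\in E\}$ be variables (positive reals). For $F\subseteq E$ write $\mathbf{x}^F=\prod_{g\in F}x_g$ and let $k(F)$ be the number of connected components of the spanning subgraph $(V,F)$. For $A,B\subseteq E$ set $\mathcal{T}_A^B=\sum_{F\subseteq E:\,A\subseteq F,\,F\cap B=\varnothing}\mathbf{x}^F q^{k(F)}$. Write $\mathcal{T}_e^f=\mathcal{T}_{\{e\}}^{\{f\}}$, $\mathcal{T}_f^e=\mathcal{T}_{\{f\}}^{\{e\}}$, $\mathcal{T}_{ef}=\mathcal{T}_{\{e,f\}}^{\varnothing}$, $\mathcal{T}^{ef}=\mathcal{T}_{\varnothing}^{\{e,f\}}$. The difference $\mathcal{T}_e^f\mathcal{T}_f^e-\mathcal{T}_{ef}\mathcal{T}^{ef}$ is divisible by $x_ex_f(1-q)$, and $\mathcal{M}_{ef}(q):=(\mathcal{T}_e^f\mathcal{T}_f^e-\mathcal{T}_{ef}\mathcal{T}^{ef})/(x_ex_f(1-q))$; $\mathcal{M}_{ef}(1)$ is this polynomial evaluated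 at $q=1$. Let $E^{ef}=E\setminus\{e,f\}$. A subset $F\subseteq E^{ef}$ is a paracel if $e$ and $f$ both join the same two distinct connected components of $(V,F)$; equivalently $(V,F+e)$ and $(V,F+f)$ have the same connected components (as vertex sets) and $k(F+e)=k(F+f)=k(F)-1$. For a paracel $F$, an edge of $E^{ef}\setminus F$ is a smoot for $F$ if it also joins those same two components of $(V,F)$. Given disjoint $\beta,\gamma\subseteq E^{ef}$, a subset $\alpha\subseteq E^{ef}$ is compatible with $\beta,\gamma$ if $\alpha$ is disjoint from $\beta$ and $\gamma$, $\gamma\cup\alpha$ is a paracel, and every edge of $\beta$ is a smoot for $\gamma\cup\alpha$. Let $A_{\beta,\gamma}$ be the set of such $\alpha$. Two elements $\alpha,\alpha'\in A_{\beta,\gamma}$ (possibly equal) are twins if $\alpha\cap\alpha'\in A_{\beta,\gamma}$. $B_{\beta,\gamma}$ is the set (each monomial counted once) of monomials of the form $\mathbf{x}^{\alpha}\mathbf{x}^{\alpha'}$ with $\alpha,\alpha'$ twins in $A_{\beta,\gamma}$. *)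

theory Defs
  imports "HOL-Computational_Algebra.Polynomial" "HOL-Library.Multiset"
begin

text \<open>A finite multigraph (parallel edges and loops allowed) is given by a vertex set V,
  an edge set E and an endpoint map ends :: 'e => 'v * 'v (a loop has equal endpoints).\<close>

definition adj :: "('e \<Rightarrow> 'v \<times> 'v) \<Rightarrow> 'e set \<Rightarrow> ('v \<times> 'v) set" where
  "adj ends F = {(fst (ends g), snd (ends g)) | g. g \<in> F} \<union> {(snd (ends g), fst (ends g)) | g. g \<in> F}"

definition conn :: "'v set \<Rightarrow> ('e \<Rightarrow> 'v \<times> 'v) \<Rightarrow> 'e set \<Rightarrow> ('v \<times> 'v) set" where
  "conn V ends F = {(u, w). u \<in> V \<and> w \<in> V \<and> (u, w) \<in> (adj ends F)\<^sup>*}"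

definition comp :: "'v set \<Rightarrow> ('e \<Rightarrow> 'v \<times> 'v) \<Rightarrow> 'e set \<Rightarrow> 'v \<Rightarrow> 'v set" where
  "comp V ends F v = conn V ends F `` {v}"

definition ncomp :: "'v set \<Rightarrow> ('e \<Rightarrow> 'v \<times> 'v) \<Rightarrow> 'e set \<Rightarrow> nat" where
  "ncomp V ends F = card (V // conn V ends F)"

definition joins :: "'v set \<Rightarrow> ('e \<Rightarrow> 'v \<times> 'v) \<Rightarrow> 'e set \<Rightarrow> 'e \<Rightarrow> 'v set set" where
  "joins V ends F g = {comp V ends F (fst (ends g)), comp V ends F (snd (ends g))}"

definition monoF :: "('e \<Rightarrow> real) \<Rightarrow> 'e set \<Rightarrow> real" where
  "monoF x F = (\<Prod>g\<in>F. x g)"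

definition TAB :: "'v set \<Rightarrow> 'e set \<Rightarrow> ('e \<Rightarrow> 'v \<times> 'v) \<Rightarrow> ('e \<Rightarrow> real) \<Rightarrow> 'e set \<Rightarrow> 'e set \<Rightarrow> real poly" where
  "TAB V E ends x A B = (\<Sum>F\<in>{F. F \<subseteq> E \<and> A \<subseteq> F \<and> F \<inter> B = {}}. monom (monoF x F) (ncomp V ends F))"

text \<open>M_ef(q) = (T_e^f T_f^e - T_ef T^ef) / (x_e x_f (1-q)).\<close>
definition Mef :: "'v set \<Rightarrow> 'e set \<Rightarrow> ('e \<Rightarrow> 'v \<times> 'v) \<Rightarrow> ('e \<Rightarrow> real) \<Rightarrow> 'e \<Rightarrow> 'e \<Rightarrow> real poly" where
  "Mef V E ends x e f =
     (TAB V E ends x {e} {f} * TAB V E ends x {f} {e} - TAB V E ends x {e, f} {} * TAB V E ends x {} {e, f})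
       div [: x e * x f, - (x e * x f) :]"

definition paracel :: "'v set \<Rightarrow> 'e set \<Rightarrow> ('e \<Rightarrow> 'v \<times> 'v) \<Rightarrow> 'e \<Rightarrow> 'e \<Rightarrow> 'e set \<Rightarrow> bool" where
  "paracel V E ends e f F \<longleftrightarrow> F \<subseteq> E - {e, f} \<and>
     comp V ends F (fst (ends e)) \<noteq> comp V ends F (snd (ends e)) \<and>
     joins V ends F f = joins V ends F e"

definition smoot :: "'v set \<Rightarrow> 'e set \<Rightarrow> ('e \<Rightarrow> 'v \<times> 'v) \<Rightarrow> 'e \<Rightarrow> 'e \<Rightarrow> 'e set \<Rightarrow> 'e \<Rightarrow> bool" where
  "smoot V E ends e f F g \<longleftrightarrow> g \<in> (E - {e, f}) - F \<and> joins V ends F g = joins V ends F e"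

definition compat_set :: "'v set \<Rightarrow> 'e set \<Rightarrow> ('e \<Rightarrow> 'v \<times> 'v) \<Rightarrow> 'e \<Rightarrow> 'e \<Rightarrow> 'e set \<Rightarrow> 'e set \<Rightarrow> 'e set set" where
  "compat_set V E ends e f \<beta> \<gamma> = {\<alpha>. \<alpha> \<subseteq> E - {e, f} \<and> \<alpha> \<inter> \<beta> = {} \<and> \<alpha> \<inter> \<gamma> = {} \<and>
      paracel V E ends e f (\<gamma> \<union> \<alpha>) \<and> (\<forall>b\<in>\<beta>. smoot V E ends e f (\<gamma> \<union> \<alpha>) b)}"

text \<open>B_{beta,gamma}: set of monomials x^alpha x^alpha' (represented as multisets of edges,
  so each monomial is counted once) with alpha, alpha' twins.\<close>
definition Bset :: "'v set \<Rightarrow> 'e set \<Rightarrow> ('e \<Rightarrow> 'v \<times> 'v) \<Rightarrow> 'e \<Rightarrow> 'e \<Rightarrow> 'e set \<Rightarrow> 'e set \<Rightarrow> 'e multiset set" where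
  "Bset V E ends e f \<beta> \<gamma> = {mset_set \<alpha> + mset_set \<alpha>' | \<alpha> \<alpha>'.
      \<alpha> \<in> compat_set V E ends e f \<beta> \<gamma> \<and> \<alpha>' \<in> compat_set V E ends e f \<beta> \<gamma> \<and>
      \<alpha> \<inter> \<alpha>' \<in> compat_set V E ends e f \<beta> \<gamma>}"

definition eval_monomial :: "('e \<Rightarrow> real) \<Rightarrow> 'e multiset \<Rightarrow> real" where
  "eval_monomial x m = (\<Prod>g\<in>set_mset m. x g ^ count m g)"

end

(*
  Put Z = (product of 1 + x_g over g in E - {e, f}) and P = (sum of x^H over all paracels H);
  both sides equal Z * P.

  Left side: at q = 1 each T_A^B with A and B partitioning {e, f} equals x^A * Z, so the numerator N
  of M_ef vanishes at q = 1 and M_ef(1) = - N'(1) / (x_e x_f). Differentiating brings down the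
  component counts, and M_ef(1) becomes Z times the sum over G of x^G (k(G+e+f) + k(G) - k(G+e)
  - k(G+f)). This second difference is 1 if G is a paracel (the endpoints of f are separated in G
  but joined once e is added) and 0 otherwise.

  Right side: twins \<alpha>, \<alpha>' are encoded by I = \<alpha> \<inter> \<alpha>' and their symmetric difference W, a set of
  "neutral" edges (outside \<gamma> \<union> I and not smoots for it). Conversely, adding neutral edges that all
  meet, or all avoid, the component of one endpoint of e keeps a paracel a paracel, so splitting W
  this way yields twins I \<union> W1, I \<union> W2. Hence B_{\<beta>,\<gamma>} consists of the monomials x^I x^I x^W, and
  summing over W, then reindexing by the paracel H = \<gamma> \<union> I, the subset I of H and the set \<beta> of
  smoots of H, leaves x^H times the product of 1 + x_g over H, its smoots and its neutral edges,
  which is x^H * Z.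
*)
theory Submission
  imports Defs
begin

section \<open>Connected components of spanning subgraphs\<close>

lemma adj_sym: "(p, q) \<in> adj ends F \<Longrightarrow> (q, p) \<in> adj ends F"
  unfolding adj_def by blast

lemma adj_insert:
  "adj ends (insert g F) =
    insert (fst (ends g), snd (ends g)) (insert (snd (ends g), fst (ends g)) (adj ends F))"
  unfolding adj_def by blast

lemma sym_rtrancl_adj: "sym ((adj ends F)\<^sup>*)"
  by (rule sym_rtrancl) (auto intro: symI adj_sym)

lemma conn_mono: "F \<subseteq> F' \<Longrightarrow> conn V ends F \<subseteq> conn V ends F'"
  unfolding conn_def adj_def by (auto elim!: rtrancl_mono[THEN subsetD, rotated])

lemma conn_equiv: "equiv V (conn V ends F)"
proof (rule equivI)
  show "conn V ends F \<subseteq> V \<times> V" unfolding conn_def by auto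
  show "refl_on V (conn V ends F)" unfolding refl_on_def conn_def by auto
  show "sym (conn V ends F)"
    using sym_rtrancl_adj[of ends F] unfolding conn_def sym_def by blast
  show "trans (conn V ends F)" unfolding conn_def trans_def by (auto intro: rtrancl_trans)
qed

lemma conn_sym: "(p, q) \<in> conn V ends F \<Longrightarrow> (q, p) \<in> conn V ends F"
  and conn_trans: "(p, q) \<in> conn V ends F \<Longrightarrow> (q, r) \<in> conn V ends F \<Longrightarrow> (p, r) \<in> conn V ends F"
  using conn_equiv[of V ends F] unfolding equiv_def by (auto dest: symD transD)

lemma conn_edge:
  "g \<in> F \<Longrightarrow> fst (ends g) \<in> V \<Longrightarrow> snd (ends g) \<in> V \<Longrightarrow>
    (fst (ends g), snd (ends g)) \<in> conn V ends F"
  unfolding conn_def adj_def by blast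

lemma conn_insert_iff:
  assumes "fst (ends g) \<in> V" "snd (ends g) \<in> V"
  shows "(p, q) \<in> conn V ends (insert g F) \<longleftrightarrow>
    (p, q) \<in> conn V ends F \<or>
    ((p, fst (ends g)) \<in> conn V ends F \<and> (snd (ends g), q) \<in> conn V ends F) \<or>
    ((p, snd (ends g)) \<in> conn V ends F \<and> (fst (ends g), q) \<in> conn V ends F)"
  using assms sym_rtrancl_adj[of ends F]
  unfolding conn_def adj_insert rtrancl_insert
  by (auto simp: sym_def intro: rtrancl_trans)

lemma mem_comp_iff: "u \<in> comp V ends F v \<longleftrightarrow> (v, u) \<in> conn V ends F"
  unfolding comp_def by simp

lemma mem_comp_self: "v \<in> V \<Longrightarrow> v \<in> comp V ends F v"
  by (simp add: mem_comp_iff conn_def)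

lemma comp_eq_iff:
  "p \<in> V \<Longrightarrow> q \<in> V \<Longrightarrow> comp V ends F p = comp V ends F q \<longleftrightarrow> (p, q) \<in> conn V ends F"
  unfolding comp_def by (rule eq_equiv_class_iff[OF conn_equiv])

lemma comp_eq_comp_iff:
  "p \<in> V \<Longrightarrow> q \<in> V \<Longrightarrow> comp V ends F p = comp V ends F q \<longleftrightarrow> p \<in> comp V ends F q"
  using comp_eq_iff[of p V q ends F] conn_sym[of p q V ends F] conn_sym[of q p V ends F]
  by (auto simp: mem_comp_iff)

lemma comp_eq_if_mem: "u \<in> comp V ends F v \<Longrightarrow> comp V ends F u = comp V ends F v"
  by (metis comp_def conn_equiv equiv_class_eq_iff mem_comp_iff)

lemma comp_Un_untouched:
  assumes F: "\<forall>g\<in>F. fst (ends g) \<in> V \<and> snd (ends g) \<in> V"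
    and W: "\<forall>w\<in>W. fst (ends w) \<notin> comp V ends F v \<and> snd (ends w) \<notin> comp V ends F v"
  shows "comp V ends (F \<union> W) v \<subseteq> comp V ends F v"
proof
  fix u assume u: "u \<in> comp V ends (F \<union> W) v"
  let ?C = "comp V ends F v"
  have "adj ends (F \<union> W) `` ?C \<subseteq> ?C"
    using F W unfolding comp_def conn_def adj_def
    by (fastforce intro: rtrancl_into_rtrancl simp: adj_def)
  then have "(adj ends (F \<union> W))\<^sup>* `` ?C = ?C" by (rule Image_closed_trancl)
  moreover have "v \<in> ?C" "(v, u) \<in> (adj ends (F \<union> W))\<^sup>*"
    using u unfolding comp_def conn_def by auto
  ultimately show "u \<in> ?C" by blast
qed

lemma merged_equiv_class:
  assumes R: "equiv V R" and p: "p \<in> V"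
    and R': "\<And>p q. (p, q) \<in> R' \<longleftrightarrow>
      (p, q) \<in> R \<or> ((p, a) \<in> R \<and> (b, q) \<in> R) \<or> ((p, b) \<in> R \<and> (a, q) \<in> R)"
  shows "R' `` {p} = (if p \<in> R `` {a} \<union> R `` {b} then R `` {a} \<union> R `` {b} else R `` {p})"
proof -
  have sym: "(q, r) \<in> R \<Longrightarrow> (r, q) \<in> R"
    and trans: "(q, r) \<in> R \<Longrightarrow> (r, s) \<in> R \<Longrightarrow> (q, s) \<in> R" for q r s
    using R unfolding equiv_def sym_def trans_def by blast+
  show ?thesis
    by (auto simp: R'; meson sym trans)
qed

lemma card_quotient_merge:
  assumes R: "equiv V R" and fin: "finite V" and a: "a \<in> V" and b: "b \<in> V" and ab: "(a, b) \<notin> R"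
    and R': "\<And>p q. (p, q) \<in> R' \<longleftrightarrow>
      (p, q) \<in> R \<or> ((p, a) \<in> R \<and> (b, q) \<in> R) \<or> ((p, b) \<in> R \<and> (a, q) \<in> R)"
  shows "card (V // R') + 1 = card (V // R)"
proof -
  let ?A = "R `` {a}" and ?B = "R `` {b}"
  have classes: "?A \<in> V // R" "?B \<in> V // R" "?A \<noteq> ?B"
    using a b ab eq_equiv_class_iff[OF R a b] by (auto intro: quotientI)
  have "V // R' = insert (?A \<union> ?B) (V // R - {?A, ?B})"
  proof (intro equalityI subsetI)
    fix X assume "X \<in> V // R'"
    then obtain p where p: "p \<in> V" and X: "X = R' `` {p}" by (auto elim: quotientE)
    show "X \<in> insert (?A \<union> ?B) (V // R - {?A, ?B})"
    proof (cases "p \<in> ?A \<union> ?B")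
      case False
      moreover have "p \<in> R `` {p}" using equiv_class_self[OF R p] .
      ultimately have "R `` {p} \<noteq> ?A" "R `` {p} \<noteq> ?B" by auto
      then show ?thesis using False merged_equiv_class[OF R p R'] X p by (simp add: quotientI)
    qed (simp add: X merged_equiv_class[OF R p R'])
  next
    fix X assume "X \<in> insert (?A \<union> ?B) (V // R - {?A, ?B})"
    then consider "X = ?A \<union> ?B" | p where "p \<in> V" "X = R `` {p}" "p \<notin> ?A \<union> ?B"
      by (auto elim!: quotientE dest: equiv_class_eq[OF R])
    then show "X \<in> V // R'"
    proof cases
      case 1
      then show ?thesis
        using merged_equiv_class[OF R a R'] equiv_class_self[OF R a] quotientI[OF a, of R'] by simp
    next
      case 2
      then show ?thesis
        using merged_equiv_class[OF R 2(1) R'] quotientI[OF 2(1), of R'] by simp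
    qed
  qed
  moreover have "?A \<union> ?B \<notin> V // R"
  proof
    assume "?A \<union> ?B \<in> V // R"
    then obtain p where p: "?A \<union> ?B = R `` {p}" by (rule quotientE)
    then have "(p, a) \<in> R"
      using equiv_class_self[OF R a] by auto
    then have "R `` {p} = ?A" by (rule equiv_class_eq[OF R])
    then show False
      using p equiv_class_self[OF R b] ab by auto
  qed
  moreover have "finite (V // R)" using fin by (simp add: quotient_def)
  moreover have "card (V // R - {?A, ?B}) + 2 = card (V // R)"
    using classes calculation(3) card_mono[of "V // R" "{?A, ?B}"] by (simp add: card_Diff_subset)
  ultimately show ?thesis by simp
qed

lemma ncomp_insert:
  assumes fin: "finite V" and a: "fst (ends g) \<in> V" and b: "snd (ends g) \<in> V"
  shows "ncomp V ends (insert g F) + (if (fst (ends g), snd (ends g)) \<in> conn V ends F then 0 else 1)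
    = ncomp V ends F"
proof (cases "(fst (ends g), snd (ends g)) \<in> conn V ends F")
  case True
  then have "conn V ends (insert g F) = conn V ends F"
    by (auto simp: conn_insert_iff[where ends = ends and g = g, OF a b])
      (metis conn_sym conn_trans prod.collapse)+
  then show ?thesis using True unfolding ncomp_def by simp
next
  case False
  show ?thesis
    using card_quotient_merge[OF conn_equiv fin a b False conn_insert_iff[where ends = ends and g = g, OF a b]]
      False
    unfolding ncomp_def by simp
qed

section \<open>Paracels\<close>

locale edge_pair =
  fixes V :: "'v set" and E :: "'e set" and ends :: "'e \<Rightarrow> 'v \<times> 'v" and e f :: 'e
  assumes finite_V: "finite V" and finite_E: "finite E"
    and ends_in_V: "\<forall>g\<in>E. fst (ends g) \<in> V \<and> snd (ends g) \<in> V"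
    and e_in_E: "e \<in> E" and f_in_E: "f \<in> E" and e_neq_f: "e \<noteq> f"
begin

abbreviation "Ef \<equiv> E - {e, f}"
abbreviation "e1 \<equiv> fst (ends e)"
abbreviation "e2 \<equiv> snd (ends e)"
abbreviation "paracels \<equiv> {H. paracel V E ends e f H}"

lemma fst_ends_in_V: "g \<in> E \<Longrightarrow> fst (ends g) \<in> V"
  and snd_ends_in_V: "g \<in> E \<Longrightarrow> snd (ends g) \<in> V"
  using ends_in_V by auto

lemma e1_in_V: "e1 \<in> V" and e2_in_V: "e2 \<in> V"
  using e_in_E by (auto simp: fst_ends_in_V snd_ends_in_V)

lemma finite_Ef: "finite Ef"
  using finite_E by simp

definition parallel :: "'e set \<Rightarrow> 'e \<Rightarrow> bool" where
  "parallel H g \<longleftrightarrow>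
    (fst (ends g) \<in> comp V ends H e1 \<and> snd (ends g) \<in> comp V ends H e2) \<or>
    (fst (ends g) \<in> comp V ends H e2 \<and> snd (ends g) \<in> comp V ends H e1)"

lemma joins_eq_joins_e_iff:
  assumes "g \<in> E" shows "joins V ends H g = joins V ends H e \<longleftrightarrow> parallel H g"
  using assms e_in_E unfolding joins_def doubleton_eq_iff parallel_def
  by (simp add: comp_eq_comp_iff fst_ends_in_V snd_ends_in_V)

lemma paracel_iff:
  "paracel V E ends e f H \<longleftrightarrow> H \<subseteq> Ef \<and> comp V ends H e1 \<noteq> comp V ends H e2 \<and> parallel H f"
  using joins_eq_joins_e_iff[OF f_in_E, of H] by (auto simp: paracel_def)

lemma smoot_iff: "smoot V E ends e f H g \<longleftrightarrow> g \<in> Ef - H \<and> parallel H g"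
  using joins_eq_joins_e_iff by (auto simp: smoot_def)

lemma parallel_mono: "H \<subseteq> H' \<Longrightarrow> parallel H g \<Longrightarrow> parallel H' g"
  using conn_mono[of H H' V ends] unfolding parallel_def mem_comp_iff by blast

lemma finite_paracels: "finite paracels"
  by (rule finite_subset[of _ "Pow Ef"]) (auto simp: paracel_def finite_E)

lemma not_parallel_if_mem_paracel:
  assumes H: "paracel V E ends e f H" and w: "w \<in> H"
  shows "\<not> parallel H w"
proof
  assume "parallel H w"
  have wE: "w \<in> E" using H w by (auto simp: paracel_def)
  have "comp V ends H (fst (ends w)) = comp V ends H (snd (ends w))"
    using conn_edge[where ends = ends, OF w fst_ends_in_V[OF wE] snd_ends_in_V[OF wE]] wE
    by (simp add: comp_eq_iff fst_ends_in_V snd_ends_in_V)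
  then have "comp V ends H e1 = comp V ends H e2"
    using \<open>parallel H w\<close> unfolding parallel_def by (metis comp_eq_if_mem)
  then show False using H by (simp add: paracel_iff)
qed

lemma paracel_iff_conn_insert:
  assumes "G \<subseteq> Ef"
  shows "paracel V E ends e f G \<longleftrightarrow>
    (fst (ends f), snd (ends f)) \<notin> conn V ends G \<and>
    (fst (ends f), snd (ends f)) \<in> conn V ends (insert e G)"
    (is "_ \<longleftrightarrow> ?f \<notin> ?R \<and> _")
proof -
  have "comp V ends G e1 \<noteq> comp V ends G e2 \<and> parallel G f \<longleftrightarrow>
    ?f \<notin> ?R \<and> ((fst (ends f), e1) \<in> ?R \<and> (e2, snd (ends f)) \<in> ?R \<or>
                 (fst (ends f), e2) \<in> ?R \<and> (e1, snd (ends f)) \<in> ?R)"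
    unfolding comp_eq_comp_iff[OF e1_in_V e2_in_V] parallel_def mem_comp_iff
    by (meson conn_sym conn_trans)
  then show ?thesis
    using assms unfolding paracel_iff conn_insert_iff[where ends = ends and g = e, OF e1_in_V e2_in_V] by blast
qed

lemma ncomp_second_difference:
  assumes "G \<subseteq> Ef"
  shows "real (ncomp V ends (insert f (insert e G))) + real (ncomp V ends G)
      - real (ncomp V ends (insert e G)) - real (ncomp V ends (insert f G))
    = (if paracel V E ends e f G then 1 else 0)"
proof -
  have f1: "fst (ends f) \<in> V" and f2: "snd (ends f) \<in> V" using f_in_E ends_in_V by auto
  let ?f = "(fst (ends f), snd (ends f))"
  have "ncomp V ends G = ncomp V ends (insert f G) + (if ?f \<in> conn V ends G then 0 else 1)"
    "ncomp V ends (insert e G) =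
      ncomp V ends (insert f (insert e G)) + (if ?f \<in> conn V ends (insert e G) then 0 else 1)"
    using ncomp_insert[where ends = ends and g = f, OF finite_V f1 f2] by simp_all
  moreover have "conn V ends G \<subseteq> conn V ends (insert e G)" by (rule conn_mono) blast
  ultimately show ?thesis
    using paracel_iff_conn_insert[OF assms] by auto
qed

end

section \<open>The left-hand side at \<open>q = 1\<close>\<close>

lemma poly_div_linear_at_root:
  fixes N :: "'a::field poly"
  assumes c: "c \<noteq> 0" and root: "poly N 1 = 0"
  shows "poly (N div [:c, - c:]) 1 = - poly (pderiv N) 1 / c"
proof -
  obtain R where R: "N = [:-1, 1:] * R"
    using root poly_eq_0_iff_dvd[of N 1] by (auto elim: dvdE)
  have "N = [:c, - c:] * smult (- 1 / c) R"
    unfolding R using c by (simp add: field_simps)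
  then have "N div [:c, - c:] = smult (- 1 / c) R"
    using c by (metis nonzero_mult_div_cancel_left pCons_eq_0_iff)
  moreover have "poly (pderiv N) 1 = poly R 1"
    unfolding R by (simp add: pderiv_mult pderiv_diff pderiv_pCons)
  ultimately show ?thesis by simp
qed

lemma monoF_Un:
  "finite A \<Longrightarrow> finite B \<Longrightarrow> A \<inter> B = {} \<Longrightarrow> monoF x (A \<union> B) = monoF x A * monoF x B"
  unfolding monoF_def by (rule prod.union_disjoint)

lemma sum_monoF_Pow: "finite S \<Longrightarrow> (\<Sum>W\<in>Pow S. monoF x W) = (\<Prod>s\<in>S. 1 + x s)"
  using prod_add[of S x "\<lambda>_. 1"] unfolding monoF_def by (simp add: add.commute)

lemma TAB_eq_sum_Pow:
  assumes E: "finite E" and A: "A \<subseteq> E" and AB: "A \<inter> B = {}"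
  shows "TAB V E ends x A B =
    (\<Sum>G\<in>Pow (E - A - B). monom (monoF x A * monoF x G) (ncomp V ends (A \<union> G)))"
proof -
  have "{F. F \<subseteq> E \<and> A \<subseteq> F \<and> F \<inter> B = {}} = (\<union>) A ` Pow (E - A - B)"
    using A AB by (auto intro!: image_eqI[where x = "F - A" for F])
  moreover have "inj_on ((\<union>) A) (Pow (E - A - B))"
    by (rule inj_onI) blast
  moreover have "monoF x (A \<union> G) = monoF x A * monoF x G" if "G \<in> Pow (E - A - B)" for G
    using that A E by (intro monoF_Un) (auto intro: finite_subset)
  ultimately show ?thesis
    unfolding TAB_def by (simp add: sum.reindex)
qed

lemma poly_TAB_1:
  assumes "finite E" "A \<subseteq> E" "A \<inter> B = {}"
  shows "poly (TAB V E ends x A B) 1 = monoF x A * (\<Sum>G\<in>Pow (E - A - B). monoF x G)"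
  by (simp add: TAB_eq_sum_Pow[OF assms] poly_sum poly_monom sum_distrib_left)

lemma poly_pderiv_TAB_1:
  assumes "finite E" "A \<subseteq> E" "A \<inter> B = {}"
  shows "poly (pderiv (TAB V E ends x A B)) 1 =
    monoF x A * (\<Sum>G\<in>Pow (E - A - B). monoF x G * real (ncomp V ends (A \<union> G)))"
  by (simp add: TAB_eq_sum_Pow[OF assms] higher_pderiv_sum[where n = 1, simplified]
      poly_sum pderiv_monom poly_monom sum_distrib_left mult_ac)

context edge_pair
begin

lemma poly_Mef_1:
  assumes "x e * x f \<noteq> 0"
  shows "poly (Mef V E ends x e f) 1 = (\<Sum>G\<in>Pow Ef. monoF x G) * (\<Sum>H\<in>paracels. monoF x H)"
proof -
  define c where "c = x e * x f"
  define Z where "Z = (\<Sum>G\<in>Pow Ef. monoF x G)"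
  define K where "K A = (\<Sum>G\<in>Pow Ef. monoF x G * real (ncomp V ends (A \<union> G)))" for A
  define N where "N = TAB V E ends x {e} {f} * TAB V E ends x {f} {e}
    - TAB V E ends x {e, f} {} * TAB V E ends x {} {e, f}"
  have sets: "E - {e} - {f} = Ef" "E - {f} - {e} = Ef" "E - {e, f} - {} = Ef" "E - {} - {e, f} = Ef"
    by auto
  have mono_values: "monoF x {e} = x e" "monoF x {f} = x f" "monoF x {e, f} = c" "monoF x {} = 1"
    using e_neq_f by (simp_all add: monoF_def c_def)
  note TAB_at_1 = poly_TAB_1[OF finite_E] poly_pderiv_TAB_1[OF finite_E]
  have "poly N 1 = 0"
    unfolding N_def using e_in_E f_in_E e_neq_f by (simp add: TAB_at_1 sets mono_values c_def)
  then have "poly (Mef V E ends x e f) 1 = - poly (pderiv N) 1 / c"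
    unfolding Mef_def N_def[symmetric] c_def by (rule poly_div_linear_at_root[OF assms])
  also have "poly (pderiv N) 1 = c * Z * (K {e} + K {f} - K {e, f} - K {})"
    unfolding N_def using e_in_E f_in_E e_neq_f
    by (simp add: pderiv_diff pderiv_mult TAB_at_1 sets mono_values Z_def K_def c_def algebra_simps)
  also have "- (c * Z * (K {e} + K {f} - K {e, f} - K {})) / c = Z * (K {e, f} + K {} - K {e} - K {f})"
    using assms by (simp add: c_def field_simps)
  also have "K {e, f} + K {} - K {e} - K {f} = (\<Sum>G\<in>Pow Ef. monoF x G *
      (real (ncomp V ends (insert f (insert e G))) + real (ncomp V ends G)
        - real (ncomp V ends (insert e G)) - real (ncomp V ends (insert f G))))"
    by (simp add: K_def sum.distrib sum_subtractf algebra_simps insert_commute)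
  also have "\<dots> = (\<Sum>G\<in>Pow Ef. if paracel V E ends e f G then monoF x G else 0)"
    by (rule sum.cong) (auto simp: ncomp_second_difference)
  also have "\<dots> = (\<Sum>H\<in>{G \<in> Pow Ef. paracel V E ends e f G}. monoF x H)"
    by (rule sum.inter_filter[symmetric]) (simp add: finite_E)
  also have "{G \<in> Pow Ef. paracel V E ends e f G} = paracels"
    by (auto simp: paracel_def)
  finally show ?thesis unfolding Z_def .
qed

end

section \<open>Twin pairs and the right-hand side\<close>

definition twin_mset :: "'a set \<Rightarrow> 'a set \<Rightarrow> 'a multiset" where
  "twin_mset I W = mset_set I + mset_set I + mset_set W"

lemma mset_set_add_mset_set:
  assumes "finite A" "finite B"
  shows "mset_set A + mset_set B = twin_mset (A \<inter> B) ((A - B) \<union> (B - A))"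
  using assms by (auto simp: multiset_eq_iff twin_mset_def count_mset_set')

lemma count_twin_mset:
  assumes "finite I" "finite W" "I \<inter> W = {}"
  shows "count (twin_mset I W) a = (if a \<in> I then 2 else if a \<in> W then 1 else 0)"
  using assms by (auto simp: twin_mset_def count_mset_set')

lemma inj_on_twin_mset:
  "inj_on (\<lambda>(I, W). twin_mset I W) {(I, W). finite I \<and> finite W \<and> I \<inter> W = {}}"
proof (rule inj_onI, clarify)
  fix I W I' W'
  assume IW: "finite I" "finite W" "I \<inter> W = {}" and IW': "finite I'" "finite W'" "I' \<inter> W' = {}"
    and eq: "twin_mset I W = twin_mset I' W'"
  have "I = {a. count (twin_mset I W) a = 2}" "W = {a. count (twin_mset I W) a = 1}"
    "I' = {a. count (twin_mset I' W') a = 2}" "W' = {a. count (twin_mset I' W') a = 1}"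
    using count_twin_mset[OF IW] count_twin_mset[OF IW'] IW(3) IW'(3) by auto
  then show "I = I' \<and> W = W'" using eq by metis
qed

lemma eval_twin_mset:
  assumes "finite I" "finite W" "I \<inter> W = {}"
  shows "eval_monomial x (twin_mset I W) = monoF x I ^ 2 * monoF x W"
proof -
  have "set_mset (twin_mset I W) = I \<union> W"
    using assms by (auto simp: twin_mset_def)
  then have "eval_monomial x (twin_mset I W) = (\<Prod>a\<in>I \<union> W. x a ^ count (twin_mset I W) a)"
    by (simp add: eval_monomial_def)
  also have "\<dots> = (\<Prod>a\<in>I. x a ^ 2) * (\<Prod>a\<in>W. x a)"
    using assms by (simp add: prod.union_disjoint count_twin_mset cong: prod.cong)
      (auto intro!: prod.cong)
  finally show ?thesis by (simp add: monoF_def prod_power_distrib)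
qed

lemma sum_Sigma_pairs:
  assumes "finite A" "\<forall>(a, b)\<in>A. finite (B a b)"
  shows "(\<Sum>(a, b)\<in>A. \<Sum>c\<in>B a b. g a b c) = (\<Sum>((a, b), c)\<in>Sigma A (\<lambda>(a, b). B a b). g a b c)"
  using sum.Sigma[OF assms(1), of "\<lambda>p. B (fst p) (snd p)" "\<lambda>p. g (fst p) (snd p)"] assms(2)
  by (simp add: split_def)

context edge_pair
begin

abbreviation "disjoint_pairs \<equiv> {(\<beta>, \<gamma>). \<beta> \<subseteq> Ef \<and> \<gamma> \<subseteq> Ef \<and> \<beta> \<inter> \<gamma> = {}}"

definition touches :: "'e set \<Rightarrow> 'e \<Rightarrow> bool" where
  "touches H w \<longleftrightarrow> fst (ends w) \<in> comp V ends H e1 \<or> snd (ends w) \<in> comp V ends H e1"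

definition smoots :: "'e set \<Rightarrow> 'e set" where
  "smoots H = {g. smoot V E ends e f H g}"

definition neutral :: "'e set \<Rightarrow> 'e set" where
  "neutral H = Ef - H - smoots H"

lemma smoots_eq: "smoots H = {g \<in> Ef - H. parallel H g}"
  by (auto simp: smoots_def smoot_iff)

lemma neutral_eq: "neutral H = {g \<in> Ef - H. \<not> parallel H g}"
  by (auto simp: neutral_def smoots_eq)

lemma finite_neutral: "finite (neutral H)"
  using finite_E by (auto simp: neutral_def)

text \<open>An edge of \<open>W\<close> meeting the component of \<open>e1\<close> cannot also meet that of \<open>e2\<close> without
  being parallel to \<open>e\<close>; so one of the two components receives no edge of \<open>W\<close> at all.\<close>

lemma paracel_Un_one_sided:
  assumes H: "paracel V E ends e f H" and W: "W \<subseteq> neutral H"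
    and one_sided: "(\<forall>w\<in>W. touches H w) \<or> (\<forall>w\<in>W. \<not> touches H w)"
  shows "paracel V E ends e f (H \<union> W)"
proof -
  let ?C = "comp V ends H"
  have HW: "H \<union> W \<subseteq> Ef" and "parallel H f" and C12: "?C e1 \<noteq> ?C e2"
    using H W by (auto simp: paracel_iff neutral_def)
  have H_ends: "\<forall>g\<in>H. fst (ends g) \<in> V \<and> snd (ends g) \<in> V"
    using HW ends_in_V by blast
  have "comp V ends (H \<union> W) e1 \<noteq> comp V ends (H \<union> W) e2"
    using one_sided
  proof
    assume touching: "\<forall>w\<in>W. touches H w"
    have separate: "u \<notin> ?C e1 \<or> u \<notin> ?C e2" for u
      using C12 comp_eq_if_mem by metis
    have "fst (ends w) \<notin> ?C e2 \<and> snd (ends w) \<notin> ?C e2" if "w \<in> W" for w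
    proof -
      have "touches H w" "\<not> parallel H w"
        using touching that W by (auto simp: neutral_eq)
      then show ?thesis
        using separate unfolding touches_def parallel_def by blast
    qed
    then have "comp V ends (H \<union> W) e2 \<subseteq> ?C e2"
      using H_ends by (intro comp_Un_untouched) auto
    moreover have "e1 \<notin> ?C e2"
      using C12 comp_eq_comp_iff[OF e1_in_V e2_in_V, of ends H] by auto
    ultimately show ?thesis
      using mem_comp_self[OF e1_in_V, of ends "H \<union> W"] by blast
  next
    assume "\<forall>w\<in>W. \<not> touches H w"
    then have "comp V ends (H \<union> W) e1 \<subseteq> ?C e1"
      using H_ends by (intro comp_Un_untouched) (auto simp: touches_def)
    moreover have "e2 \<notin> ?C e1"
      using C12 comp_eq_comp_iff[OF e2_in_V e1_in_V, of ends H] by auto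
    ultimately show ?thesis
      using mem_comp_self[OF e2_in_V, of ends "H \<union> W"] by blast
  qed
  then show ?thesis
    using HW \<open>parallel H f\<close> by (auto simp: paracel_iff intro: parallel_mono)
qed

lemma compat_set_iff:
  "I \<in> compat_set V E ends e f \<beta> \<gamma> \<longleftrightarrow> I \<subseteq> Ef \<and> I \<inter> \<beta> = {} \<and> I \<inter> \<gamma> = {} \<and>
    paracel V E ends e f (\<gamma> \<union> I) \<and> \<beta> \<subseteq> smoots (\<gamma> \<union> I)"
  by (auto simp: compat_set_def smoots_def)

lemma finite_compat_set: "finite (compat_set V E ends e f \<beta> \<gamma>)"
  by (rule finite_subset[of _ "Pow Ef"]) (auto simp: compat_set_iff finite_E)

lemma Diff_subset_neutral:
  assumes "\<alpha> \<in> compat_set V E ends e f \<beta> \<gamma>" and "I \<subseteq> \<alpha>"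
  shows "\<alpha> - I \<subseteq> neutral (\<gamma> \<union> I)"
proof
  fix w assume w: "w \<in> \<alpha> - I"
  have par: "paracel V E ends e f (\<gamma> \<union> \<alpha>)" and "\<alpha> \<subseteq> Ef" "\<alpha> \<inter> \<gamma> = {}"
    using assms(1) by (auto simp: compat_set_iff)
  moreover have "\<not> parallel (\<gamma> \<union> \<alpha>) w"
    using not_parallel_if_mem_paracel[OF par] w by blast
  then have "\<not> parallel (\<gamma> \<union> I) w"
    using assms(2) parallel_mono[of "\<gamma> \<union> I" "\<gamma> \<union> \<alpha>" w] by blast
  ultimately show "w \<in> neutral (\<gamma> \<union> I)"
    using w by (auto simp: neutral_eq)
qed

lemma compat_set_Un_one_sided:
  assumes I: "I \<in> compat_set V E ends e f \<beta> \<gamma>" and W: "W \<subseteq> neutral (\<gamma> \<union> I)"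
    and one_sided: "(\<forall>w\<in>W. touches (\<gamma> \<union> I) w) \<or> (\<forall>w\<in>W. \<not> touches (\<gamma> \<union> I) w)"
  shows "I \<union> W \<in> compat_set V E ends e f \<beta> \<gamma>"
proof -
  have par: "paracel V E ends e f (\<gamma> \<union> I \<union> W)"
    using paracel_Un_one_sided[OF _ W one_sided] I by (simp add: compat_set_iff)
  have "\<beta> \<subseteq> smoots (\<gamma> \<union> I)" and "W \<inter> smoots (\<gamma> \<union> I) = {}"
    using I W by (auto simp: compat_set_iff neutral_def)
  then have "\<beta> \<subseteq> smoots (\<gamma> \<union> I \<union> W)"
    using W by (auto simp: smoots_eq neutral_def intro: parallel_mono[rotated])
  then show ?thesis
    using I W par by (auto simp: compat_set_iff neutral_def Un_assoc)
qed

lemma Bset_eq_image: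
  "Bset V E ends e f \<beta> \<gamma> =
    (\<lambda>(I, W). twin_mset I W) ` Sigma (compat_set V E ends e f \<beta> \<gamma>) (\<lambda>I. Pow (neutral (\<gamma> \<union> I)))"
  (is "_ = _ ` ?S")
proof (intro equalityI subsetI)
  fix m assume "m \<in> Bset V E ends e f \<beta> \<gamma>"
  then obtain \<alpha> \<alpha>' where m: "m = mset_set \<alpha> + mset_set \<alpha>'"
    and \<alpha>: "\<alpha> \<in> compat_set V E ends e f \<beta> \<gamma>" and \<alpha>': "\<alpha>' \<in> compat_set V E ends e f \<beta> \<gamma>"
    and twins: "\<alpha> \<inter> \<alpha>' \<in> compat_set V E ends e f \<beta> \<gamma>"
    unfolding Bset_def by blast
  have "finite \<alpha>" "finite \<alpha>'"
    using \<alpha> \<alpha>' by (auto simp: compat_set_iff intro: rev_finite_subset[OF finite_Ef])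
  then have "m = twin_mset (\<alpha> \<inter> \<alpha>') ((\<alpha> - \<alpha>') \<union> (\<alpha>' - \<alpha>))"
    unfolding m by (rule mset_set_add_mset_set)
  moreover have "(\<alpha> - \<alpha>') \<union> (\<alpha>' - \<alpha>) \<subseteq> neutral (\<gamma> \<union> (\<alpha> \<inter> \<alpha>'))"
    using Diff_subset_neutral[OF \<alpha>, of "\<alpha> \<inter> \<alpha>'"] Diff_subset_neutral[OF \<alpha>', of "\<alpha> \<inter> \<alpha>'"]
    by (auto simp: Diff_Int)
  ultimately show "m \<in> (\<lambda>(I, W). twin_mset I W) ` ?S"
    using twins by blast
next
  fix m assume "m \<in> (\<lambda>(I, W). twin_mset I W) ` ?S"
  then obtain I W where m: "m = twin_mset I W" and I: "I \<in> compat_set V E ends e f \<beta> \<gamma>"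
    and W: "W \<subseteq> neutral (\<gamma> \<union> I)"
    by auto
  define W1 where "W1 = {w \<in> W. touches (\<gamma> \<union> I) w}"
  define W2 where "W2 = W - W1"
  have in_compat: "I \<union> W1 \<in> compat_set V E ends e f \<beta> \<gamma>" "I \<union> W2 \<in> compat_set V E ends e f \<beta> \<gamma>"
    using W by (auto simp: W1_def W2_def intro!: compat_set_Un_one_sided[OF I])
  have "finite (I \<union> W1)" "finite (I \<union> W2)"
    using I W finite_neutral by (auto simp: compat_set_iff W1_def W2_def
        intro: rev_finite_subset[OF finite_Ef] rev_finite_subset[OF finite_neutral])
  moreover have "(I \<union> W1) \<inter> (I \<union> W2) = I" "((I \<union> W1) - (I \<union> W2)) \<union> ((I \<union> W2) - (I \<union> W1)) = W"
    using W by (auto simp: neutral_def W1_def W2_def)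
  ultimately have "m = mset_set (I \<union> W1) + mset_set (I \<union> W2)"
    unfolding m by (simp add: mset_set_add_mset_set)
  moreover have "(I \<union> W1) \<inter> (I \<union> W2) \<in> compat_set V E ends e f \<beta> \<gamma>"
    using I \<open>(I \<union> W1) \<inter> (I \<union> W2) = I\<close> by simp
  ultimately show "m \<in> Bset V E ends e f \<beta> \<gamma>"
    unfolding Bset_def using in_compat by blast
qed

lemma sum_Bset:
  "(\<Sum>m\<in>Bset V E ends e f \<beta> \<gamma>. eval_monomial x m) =
    (\<Sum>I\<in>compat_set V E ends e f \<beta> \<gamma>. monoF x I ^ 2 * (\<Prod>s\<in>neutral (\<gamma> \<union> I). 1 + x s))"
proof -
  let ?S = "Sigma (compat_set V E ends e f \<beta> \<gamma>) (\<lambda>I. Pow (neutral (\<gamma> \<union> I)))"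
  have S: "?S \<subseteq> {(I, W). finite I \<and> finite W \<and> I \<inter> W = {}}"
    by (auto simp: compat_set_iff neutral_def intro: rev_finite_subset[OF finite_Ef])
  have "(\<Sum>m\<in>Bset V E ends e f \<beta> \<gamma>. eval_monomial x m) = (\<Sum>(I, W)\<in>?S. eval_monomial x (twin_mset I W))"
    unfolding Bset_eq_image using inj_on_subset[OF inj_on_twin_mset S]
    by (simp add: sum.reindex case_prod_unfold)
  also have "\<dots> = (\<Sum>(I, W)\<in>?S. monoF x I ^ 2 * monoF x W)"
    using S by (intro sum.cong) (auto intro!: eval_twin_mset)
  also have "\<dots> = (\<Sum>I\<in>compat_set V E ends e f \<beta> \<gamma>.
      \<Sum>W\<in>Pow (neutral (\<gamma> \<union> I)). monoF x I ^ 2 * monoF x W)"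
    by (simp add: sum.Sigma finite_compat_set finite_neutral)
  also have "\<dots> = (\<Sum>I\<in>compat_set V E ends e f \<beta> \<gamma>.
      monoF x I ^ 2 * (\<Prod>s\<in>neutral (\<gamma> \<union> I). 1 + x s))"
    by (simp add: sum_distrib_left[symmetric] sum_monoF_Pow finite_neutral)
  finally show ?thesis .
qed

lemma compat_set_iff_paracel:
  "(\<beta>, \<gamma>) \<in> disjoint_pairs \<and> I \<in> compat_set V E ends e f \<beta> \<gamma> \<longleftrightarrow>
    paracel V E ends e f (\<gamma> \<union> I) \<and> \<gamma> \<inter> I = {} \<and> \<beta> \<subseteq> smoots (\<gamma> \<union> I)"
  by (auto simp: compat_set_iff smoots_eq paracel_iff)

lemma bij_betw_compat_paracel:
  "bij_betw (\<lambda>((\<beta>, \<gamma>), I). (\<gamma> \<union> I, I, \<beta>))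
    (Sigma disjoint_pairs (\<lambda>(\<beta>, \<gamma>). compat_set V E ends e f \<beta> \<gamma>))
    (Sigma paracels (\<lambda>H. Pow H \<times> Pow (smoots H)))"
  (is "bij_betw ?f ?S ?T")
proof (rule bij_betw_byWitness[where f' = "\<lambda>(H, I, \<beta>). ((\<beta>, H - I), I)"])
  show "\<forall>a\<in>?S. (\<lambda>(H, I, \<beta>). ((\<beta>, H - I), I)) (?f a) = a"
    by (auto simp: compat_set_iff)
  show "\<forall>b\<in>?T. ?f ((\<lambda>(H, I, \<beta>). ((\<beta>, H - I), I)) b) = b"
    by auto
  show "?f ` ?S \<subseteq> ?T"
    by (auto simp: compat_set_iff)
  show "(\<lambda>(H, I, \<beta>). ((\<beta>, H - I), I)) ` ?T \<subseteq> ?S"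
  proof (rule image_subsetI)
    fix b assume "b \<in> ?T"
    then obtain H I \<beta> where b: "b = (H, I, \<beta>)"
      and "paracel V E ends e f H" "I \<subseteq> H" "\<beta> \<subseteq> smoots H"
      by auto
    moreover have "H - I \<union> I = H" using \<open>I \<subseteq> H\<close> by blast
    ultimately show "(\<lambda>(H, I, \<beta>). ((\<beta>, H - I), I)) b \<in> ?S"
      using compat_set_iff_paracel[of \<beta> "H - I" I] by auto
  qed
qed

lemma prod_Ef_partition:
  assumes "H \<subseteq> Ef"
  shows "(\<Prod>s\<in>H. g s) * (\<Prod>s\<in>smoots H. g s) * (\<Prod>s\<in>neutral H. g s) = (\<Prod>s\<in>Ef. g s)"
proof -
  have fin: "finite H" "finite (smoots H)" "finite (neutral H)"
    using assms finite_neutral by (auto simp: smoots_eq intro: rev_finite_subset[OF finite_Ef])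
  have "(\<Prod>s\<in>H. g s) * (\<Prod>s\<in>smoots H. g s) = (\<Prod>s\<in>H \<union> smoots H. g s)"
    using fin by (intro prod.union_disjoint[symmetric]) (auto simp: smoots_eq)
  moreover have "(\<Prod>s\<in>H \<union> smoots H. g s) * (\<Prod>s\<in>neutral H. g s) =
      (\<Prod>s\<in>H \<union> smoots H \<union> neutral H. g s)"
    using fin by (intro prod.union_disjoint[symmetric]) (auto simp: neutral_def)
  moreover have "H \<union> smoots H \<union> neutral H = Ef"
    using assms by (auto simp: neutral_def smoots_eq)
  ultimately show ?thesis by simp
qed

lemma sum_over_paracel_fibre:
  assumes "paracel V E ends e f H"
  shows "(\<Sum>(I, \<beta>)\<in>Pow H \<times> Pow (smoots H).
      monoF x \<beta> * monoF x H * monoF x I * (\<Prod>s\<in>neutral H. 1 + x s))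
    = monoF x H * (\<Prod>s\<in>Ef. 1 + x s)"
proof -
  have H: "H \<subseteq> Ef" using assms by (simp add: paracel_iff)
  then have "finite H" "finite (smoots H)"
    by (auto simp: smoots_eq intro: rev_finite_subset[OF finite_Ef])
  let ?c = "monoF x H * (\<Prod>s\<in>neutral H. 1 + x s)"
  have "(\<Sum>(I, \<beta>)\<in>Pow H \<times> Pow (smoots H).
      monoF x \<beta> * monoF x H * monoF x I * (\<Prod>s\<in>neutral H. 1 + x s))
      = (\<Sum>I\<in>Pow H. \<Sum>\<beta>\<in>Pow (smoots H). monoF x I * monoF x \<beta> * ?c)"
    by (simp add: sum.cartesian_product mult_ac)
  also have "\<dots> = (\<Sum>I\<in>Pow H. monoF x I) * (\<Sum>\<beta>\<in>Pow (smoots H). monoF x \<beta>) * ?c"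
    unfolding sum_product by (simp add: sum_distrib_right)
  also have "\<dots> = monoF x H * (\<Prod>s\<in>Ef. 1 + x s)"
    using \<open>finite H\<close> \<open>finite (smoots H)\<close>
    by (simp add: sum_monoF_Pow prod_Ef_partition[OF H, symmetric] mult_ac)
  finally show ?thesis .
qed

lemma sum_Bset_over_disjoint_pairs:
  "(\<Sum>(\<beta>, \<gamma>)\<in>disjoint_pairs.
      monoF x \<beta> * monoF x \<gamma> * (\<Sum>m\<in>Bset V E ends e f \<beta> \<gamma>. eval_monomial x m))
    = (\<Sum>H\<in>paracels. monoF x H) * (\<Prod>s\<in>Ef. 1 + x s)"
proof -
  let ?S = "Sigma disjoint_pairs (\<lambda>(\<beta>, \<gamma>). compat_set V E ends e f \<beta> \<gamma>)"
  let ?T = "Sigma paracels (\<lambda>H. Pow H \<times> Pow (smoots H))"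
  let ?P = "\<lambda>H. \<Prod>s\<in>neutral H. 1 + x s"
  have finite_pairs: "finite disjoint_pairs"
    by (rule finite_subset[of _ "Pow Ef \<times> Pow Ef"]) (auto simp: finite_E)
  have weight: "monoF x \<beta> * monoF x \<gamma> * (monoF x I ^ 2 * ?P (\<gamma> \<union> I))
      = monoF x \<beta> * monoF x (\<gamma> \<union> I) * monoF x I * ?P (\<gamma> \<union> I)"
    if "((\<beta>, \<gamma>), I) \<in> ?S" for \<beta> \<gamma> I
  proof -
    have "\<gamma> \<inter> I = {}" "finite \<gamma>" "finite I"
      using that compat_set_iff_paracel[of \<beta> \<gamma> I]
      by (auto simp: paracel_iff intro: rev_finite_subset[OF finite_Ef])
    then show ?thesis by (simp add: monoF_Un power2_eq_square mult.assoc)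
  qed
  have "(\<Sum>(\<beta>, \<gamma>)\<in>disjoint_pairs.
      monoF x \<beta> * monoF x \<gamma> * (\<Sum>m\<in>Bset V E ends e f \<beta> \<gamma>. eval_monomial x m))
      = (\<Sum>(\<beta>, \<gamma>)\<in>disjoint_pairs. \<Sum>I\<in>compat_set V E ends e f \<beta> \<gamma>.
          monoF x \<beta> * monoF x \<gamma> * (monoF x I ^ 2 * ?P (\<gamma> \<union> I)))"
    by (simp add: sum_Bset sum_distrib_left)
  also have "\<dots> = (\<Sum>((\<beta>, \<gamma>), I)\<in>?S. monoF x \<beta> * monoF x \<gamma> * (monoF x I ^ 2 * ?P (\<gamma> \<union> I)))"
    using finite_pairs by (rule sum_Sigma_pairs) (simp add: finite_compat_set)
  also have "\<dots> = (\<Sum>((\<beta>, \<gamma>), I)\<in>?S. monoF x \<beta> * monoF x (\<gamma> \<union> I) * monoF x I * ?P (\<gamma> \<union> I))"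
    using weight by (intro sum.cong) auto
  also have "\<dots> = (\<Sum>(H, I, \<beta>)\<in>?T. monoF x \<beta> * monoF x H * monoF x I * ?P H)"
    using sum.reindex_bij_betw[OF bij_betw_compat_paracel,
        of "\<lambda>(H, I, \<beta>). monoF x \<beta> * monoF x H * monoF x I * ?P H"]
    by (simp add: case_prod_beta')
  also have "\<dots> = (\<Sum>H\<in>paracels. \<Sum>(I, \<beta>)\<in>Pow H \<times> Pow (smoots H).
      monoF x \<beta> * monoF x H * monoF x I * ?P H)"
    by (rule sum.Sigma[symmetric], rule finite_paracels)
      (auto simp: smoots_eq paracel_iff intro: rev_finite_subset[OF finite_Ef])
  also have "\<dots> = (\<Sum>H\<in>paracels. monoF x H * (\<Prod>s\<in>Ef. 1 + x s))"
    by (rule sum.cong) (simp_all add: sum_over_paracel_fibre)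
  finally show ?thesis by (simp add: sum_distrib_right)
qed

end

theorem theorem3p5:
  fixes V :: "'v set" and E :: "'e set" and ends :: "'e \<Rightarrow> 'v \<times> 'v" and e f :: 'e
    and x :: "'e \<Rightarrow> real"
  assumes "finite V" and "finite E"
    and "\<forall>g\<in>E. fst (ends g) \<in> V \<and> snd (ends g) \<in> V"
    and "e \<in> E" and "f \<in> E" and "e \<noteq> f"
    and "\<forall>g\<in>E. x g > 0"
  shows "poly (Mef V E ends x e f) 1 =
    (\<Sum>(\<beta>, \<gamma>)\<in>{(\<beta>, \<gamma>). \<beta> \<subseteq> E - {e, f} \<and> \<gamma> \<subseteq> E - {e, f} \<and> \<beta> \<inter> \<gamma> = {}}.
        monoF x \<beta> * monoF x \<gamma> * (\<Sum>m\<in>Bset V E ends e f \<beta> \<gamma>. eval_monomial x m))"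
proof -
  interpret edge_pair V E ends e f
    using assms by unfold_locales auto
  have "x e > 0" "x f > 0"
    using assms by auto
  then have "x e * x f \<noteq> 0"
    by simp
  then show ?thesis
    by (simp add: poly_Mef_1 sum_Bset_over_disjoint_pairs sum_monoF_Pow[OF finite_Ef] mult.commute)
qed

end
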